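(* Let the standing assumptions of the context hold, let $T>0$, $u_0\in H$, and let $u\in L^\infty([0,T];H)\cap L^2([0,T];V)$ be the variational solution of $u(t)=u_0+\int_0^t\big(Au(s)+b(f(u(s)+\hat v(s))-f(\hat v(s)))\big)ds$ (equality in $V'$), where $\hat v(s):=\hat v(\cdot+cs)$, and put $v(t):=u(t)+\hat v(t)$. Then $$B(t,C):=\langle v(t)-\hat v(\cdot+C),\hat v_x(\cdot+C)\rangle_H$$ is continuous in $(t,C)\in[0,T]\times\mathbb{R}$ and Lipschitz continuous in $C$ with a Lipschitz constant independent of $t\in[0,T]$.
   Context: Standing assumptions: $\nu,b>0$; $f:\mathbb{R}\to\mathbb{R}$ continuously differentiable with $f(0)=f(a)=f(1)=0$ for some $a\in(0,1)$, $f<0$ on $(0,a)$, $f>0$ on $(a,1)$, $f'(0)<0$, $f'(a)>0$, $f'(1)<0$, $\int_0^1 f\,dv\ge0$, and some $v_\ast\in(a,1)$ with $f''>0$ on $[0,v_\ast)$, $f''<0$ on $(v_\ast,1]$; moreover $\eta_1:=\sup_{\mathbb{R}}f'<\infty$, $|f(x_1)-f(x_2)|\le L|x_1-x_2|(1+x_1^2+x_2^2)$ for all $x_1,x_2\in\mathbb{R}$ and some $L<\infty$, and $|f(u+v)-f(v)-f'(v)u|\le\eta_2(1+|u|)|u|^2$ for all $v\in[0,1]$, $u\in\mathbb{R}$. $\hat v$ is a monotone increasing $C^2$ function with $\hat v(-\infty)=0$, $\hat v(+\infty)=1$, $c\hat v_x=\nu\hat v_{xx}+bf(\hat v)$ for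 a constant $c\ge0$. $H=L^2(\mathbb{R})$, $V=H^{1,2}(\mathbb{R})$ with $\|u\|_V^2=\int u^2+u_x^2$, $V\subset H\equiv H'\subset V'$, and $A:V\to V'$, ${}_{V'}\langle Au,w\rangle_V=-\nu\int u_xw_x\,dx$. The variational solution exists and is unique. *)

theory Defs
  imports "HOL-Analysis.Analysis"
begin

text \<open>Elements of H = L^2(R), represented by (measurable, square integrable) real functions.\<close>
definition L2 :: "(real \<Rightarrow> real) \<Rightarrow> bool" where
  "L2 g \<longleftrightarrow> g \<in> borel_measurable lborel \<and> integrable lborel (\<lambda>x. (g x)^2)"

definition weak_deriv :: "(real \<Rightarrow> real) \<Rightarrow> (real \<Rightarrow> real) \<Rightarrow> bool" where
  "weak_deriv g g' \<longleftrightarrow>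
     (\<forall>\<phi> \<phi>'. (\<forall>x. (\<phi> has_real_derivative \<phi>' x) (at x)) \<and> continuous_on UNIV \<phi>' \<and>
              bounded {x. \<phi> x \<noteq> 0} \<longrightarrow>
        (\<integral>x. g x * \<phi>' x \<partial>lborel) = - (\<integral>x. g' x * \<phi> x \<partial>lborel))"

text \<open>Equality in V' is expressed by testing with all
  w in V = H^{1,2}(R) (w with weak derivative w'), using  <A u, w> = - \<nu> \<integral> u_x w_x.
  ux is the (spatial, weak) derivative of u.\<close>
definition variational_solution ::
  "real \<Rightarrow> real \<Rightarrow> (real \<Rightarrow> real) \<Rightarrow> real \<Rightarrow> (real \<Rightarrow> real) \<Rightarrow> real \<Rightarrow> (real \<Rightarrow> real)
     \<Rightarrow> (real \<Rightarrow> real \<Rightarrow> real) \<Rightarrow> bool" where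
  "variational_solution \<nu> b f c vhat T u0 u \<longleftrightarrow>
     (\<forall>t\<in>{0..T}. L2 (u t)) \<and>
     (\<forall>w. L2 w \<longrightarrow> (\<lambda>t. \<integral>x. u t x * w x \<partial>lborel) \<in> borel_measurable (restrict_space lborel {0..T})) \<and>
     (\<exists>M. AE t in lborel. t \<in> {0..T} \<longrightarrow> (\<integral>x. (u t x)^2 \<partial>lborel) \<le> M) \<and>
     (\<exists>ux. (AE t in lborel. t \<in> {0..T} \<longrightarrow> L2 (ux t) \<and> weak_deriv (u t) (ux t)) \<and>
        (\<forall>w. L2 w \<longrightarrow> (\<lambda>t. \<integral>x. ux t x * w x \<partial>lborel) \<in> borel_measurable (restrict_space lborel {0..T})) \<and>
        set_integrable lborel {0..T} (\<lambda>t. \<integral>x. (u t x)^2 + (ux t x)^2 \<partial>lborel) \<and>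
        (\<forall>w w'. L2 w \<and> L2 w' \<and> weak_deriv w w' \<longrightarrow>
           set_integrable lborel {0..T}
             (\<lambda>s. - \<nu> * (\<integral>x. ux s x * w' x \<partial>lborel)
                  + b * (\<integral>x. (f (u s x + vhat (x + c * s)) - f (vhat (x + c * s))) * w x \<partial>lborel)) \<and>
           (\<forall>t\<in>{0..T}.
              (\<integral>x. u t x * w x \<partial>lborel) =
              (\<integral>x. u0 x * w x \<partial>lborel) +
              (LINT s:{0..t}|lborel. - \<nu> * (\<integral>x. ux s x * w' x \<partial>lborel)
                  + b * (\<integral>x. (f (u s x + vhat (x + c * s)) - f (vhat (x + c * s))) * w x \<partial>lborel)))))"

end

theory Submission
  imports Defs
begin

(* Since v(t) - vhat(. + C) = u(t) + (vhat(. + c t) - vhat(. + C)), the pairing splits as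
     B(t, C) = <u(t), vhat'(. + C)> + P(c t - C),   P(z) = <vhat(. + z) - vhat, vhat'>,
   and P is Lipschitz because vhat is Lipschitz and vhat' is a probability density.
   Testing the variational equation with w = vhat'(. + C), whose weak derivative vhat''(. + C)
   is square integrable, shows that the first term is continuous in t. Together with
   ||vhat'(. + C1) - vhat'(. + C2)|| <= |C1 - C2| ||vhat''|| and the essential bound on ||u(t)||
   it is Lipschitz in C, first for almost every t and then, by continuity, for every t.
   A family continuous in t and uniformly Lipschitz in C is jointly continuous.
   The integrability of vhat' and vhat'' comes from the wave equation: it bounds vhat'' from
   below, which makes vhat' bounded and forces it to vanish at infinity, so that
   (c vhat - nu vhat') / b is an antiderivative of f(vhat) with limits at both ends. *)

lemma integral_lborel_shift:
  fixes h :: "real \<Rightarrow> real"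
  shows "(\<integral>x. h (x + C) \<partial>lborel) = (\<integral>x. h x \<partial>lborel)"
  using lborel_integral_real_affine[of 1 h C] by (simp add: add.commute)

lemma integrable_lborel_shift_iff:
  fixes h :: "real \<Rightarrow> real"
  shows "integrable lborel (\<lambda>x. h (x + C)) \<longleftrightarrow> integrable lborel h"
  using lborel_integrable_real_affine_iff[of 1 h C] by (simp add: add.commute)

lemma L2_mult_integrable:
  assumes "L2 g" "L2 h"
  shows "integrable lborel (\<lambda>x. g x * h x)"
proof (rule Bochner_Integration.integrable_bound[where f="\<lambda>x. (g x)^2 + (h x)^2"])
  show "integrable lborel (\<lambda>x. (g x)^2 + (h x)^2)"
    and "(\<lambda>x. g x * h x) \<in> borel_measurable lborel"
    using assms by (auto simp: L2_def)
  have "\<bar>p * q\<bar> \<le> p^2 + q^2" for p q :: real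
  proof -
    have "2 * \<bar>p * q\<bar> \<le> p^2 + q^2"
      using sum_squares_ge_zero[of "\<bar>p\<bar> - \<bar>q\<bar>" 0] by (simp add: power2_eq_square algebra_simps abs_mult)
    then show ?thesis using abs_ge_zero[of "p * q"] by linarith
  qed
  then show "AE x in lborel. norm (g x * h x) \<le> norm ((g x)^2 + (h x)^2)"
    by simp
qed

lemma L2_diff:
  assumes "L2 g" "L2 h"
  shows "L2 (\<lambda>x. g x - h x)"
  unfolding L2_def
proof
  show "(\<lambda>x. g x - h x) \<in> borel_measurable lborel" using assms by (auto simp: L2_def)
  have "(\<lambda>x. (g x - h x)^2) = (\<lambda>x. (g x)^2 + (h x)^2 - 2 * (g x * h x))"
    by (simp add: power2_diff mult.assoc)
  then show "integrable lborel (\<lambda>x. (g x - h x)^2)"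
    using assms L2_mult_integrable[OF assms] by (simp add: L2_def)
qed

lemma L2_abs_integral_mult_le:
  assumes g: "L2 g" and h: "L2 h" and "0 < l"
  shows "\<bar>\<integral>x. g x * h x \<partial>lborel\<bar> \<le> (l * (\<integral>x. (g x)^2 \<partial>lborel) + (\<integral>x. (h x)^2 \<partial>lborel) / l) / 2"
proof -
  have amgm: "\<bar>p * q\<bar> \<le> (l * p^2 + q^2 / l) / 2" for p q :: real
  proof -
    have "0 \<le> (l * \<bar>p\<bar> - \<bar>q\<bar>)^2 / l" using \<open>0 < l\<close> by simp
    also have "\<dots> = l * p^2 + q^2 / l - 2 * \<bar>p * q\<bar>"
      using \<open>0 < l\<close> by (simp add: power2_eq_square field_simps abs_mult)
    finally show ?thesis by simp
  qed
  have "\<bar>\<integral>x. g x * h x \<partial>lborel\<bar> \<le> (\<integral>x. \<bar>g x * h x\<bar> \<partial>lborel)"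
    using integral_norm_bound[of lborel "\<lambda>x. g x * h x"] by simp
  also have "\<dots> \<le> (\<integral>x. (l * (g x)^2 + (h x)^2 / l) / 2 \<partial>lborel)"
    using g h L2_mult_integrable[OF g h] amgm
    by (intro Bochner_Integration.integral_mono) (auto simp: L2_def)
  also have "\<dots> = (l * (\<integral>x. (g x)^2 \<partial>lborel) + (\<integral>x. (h x)^2 \<partial>lborel) / l) / 2"
    using g h by (simp add: L2_def)
  finally show ?thesis .
qed

lemma L2_shift:
  assumes "L2 g"
  shows "L2 (\<lambda>x. g (x + C))"
  using assms integrable_lborel_shift_iff[of "\<lambda>x. (g x)^2" C]
  unfolding L2_def by (simp add: measurable_compose[OF _ assms[unfolded L2_def, THEN conjunct1]])

lemma L2_if_integrable_bounded:
  fixes g :: "real \<Rightarrow> real"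
  assumes g: "integrable lborel g" and bounded: "\<And>x. \<bar>g x\<bar> \<le> B"
  shows "L2 g"
  unfolding L2_def
proof
  show "g \<in> borel_measurable lborel" using g by simp
  show "integrable lborel (\<lambda>x. (g x)^2)"
  proof (rule Bochner_Integration.integrable_bound[where f="\<lambda>x. B * \<bar>g x\<bar>"])
    show "integrable lborel (\<lambda>x. B * \<bar>g x\<bar>)" using g by auto
    show "AE x in lborel. norm ((g x)^2) \<le> norm (B * \<bar>g x\<bar>)"
    proof (rule AE_I2)
      fix x
      have "\<bar>g x\<bar> * \<bar>g x\<bar> \<le> B * \<bar>g x\<bar>" and "0 \<le> B"
        using mult_right_mono[OF bounded[of x] abs_ge_zero[of "g x"]] bounded[of x] by auto
      then show "norm ((g x)^2) \<le> norm (B * \<bar>g x\<bar>)"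
        by (simp add: power2_eq_square abs_mult)
    qed
  qed (use g in simp)
qed

lemma integral_lborel_le_of_interval_integrals_le:
  fixes G :: "real \<Rightarrow> real"
  assumes G: "integrable lborel G" and bound: "\<And>R. 0 \<le> R \<Longrightarrow> integral {-R..R} G \<le> B"
  shows "(\<integral>x. G x \<partial>lborel) \<le> B"
proof (rule field_le_epsilon)
  fix e :: real assume "0 < e"
  have "(G has_integral (\<integral>x. G x \<partial>lborel)) UNIV"
    using G by (rule has_integral_integral_lborel)
  then obtain R where "0 < R" and R: "\<And>a b. ball 0 R \<subseteq> cbox a b \<Longrightarrow>
      norm (integral (cbox a b) G - (\<integral>x. G x \<partial>lborel)) < e"
    using \<open>0 < e\<close> unfolding has_integral_alt' by force
  have "ball 0 R \<subseteq> cbox (-R) R" by (auto simp: dist_real_def)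
  from R[OF this] bound[of R] \<open>0 < R\<close> show "(\<integral>x. G x \<partial>lborel) \<le> B + e"
    by (simp add: abs_less_iff)
qed

lemma square_integral_le_interval:
  fixes k :: "real \<Rightarrow> real"
  assumes k: "continuous_on {0..d} k" and "0 \<le> d"
  shows "(integral {0..d} k)^2 \<le> d * integral {0..d} (\<lambda>s. (k s)^2)"
proof -
  define A where "A = integral {0..d} k"
  define Q where "Q = integral {0..d} (\<lambda>s. (k s)^2)"
  have "(k has_integral A) {0..d}" "((\<lambda>s. (k s)^2) has_integral Q) {0..d}"
    unfolding A_def Q_def using k
    by (auto intro!: integrable_integral integrable_continuous_interval continuous_intros)
  then have "((\<lambda>s. d^2 * (k s)^2 - (2 * d * A) * k s + A^2)
      has_integral (d^2 * Q - (2 * d * A) * A + d * A^2)) {0..d}"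
    using \<open>0 \<le> d\<close> has_integral_const_real[of "A^2" 0 d]
    by (intro has_integral_add has_integral_diff has_integral_mult_right) auto
  moreover have "d^2 * (k s)^2 - (2 * d * A) * k s + A^2 = (d * k s - A)^2" for s
    by (simp add: power2_eq_square algebra_simps)
  ultimately have "((\<lambda>s. (d * k s - A)^2) has_integral (d^2 * Q - 2 * d * A * A + d * A^2)) {0..d}"
    by simp
  then have "0 \<le> d^2 * Q - 2 * d * A * A + d * A^2"
    by (rule has_integral_nonneg) simp
  then have "0 \<le> d * (d * Q - A^2)"
    by (simp add: power2_eq_square algebra_simps)
  with \<open>0 \<le> d\<close> show ?thesis
    unfolding A_def Q_def by (cases "d = 0") (auto simp: zero_le_mult_iff)
qed

lemma integral_shift_difference_square_le:
  fixes g g' :: "real \<Rightarrow> real"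
  assumes g: "\<And>x. (g has_real_derivative g' x) (at x)" and g': "continuous_on UNIV g'"
    and g_L2: "L2 g" and g'_L2: "L2 g'"
    and "0 \<le> d"
  shows "(\<integral>y. (g (y + d) - g y)^2 \<partial>lborel) \<le> d^2 * (\<integral>x. (g' x)^2 \<partial>lborel)"
proof (rule integral_lborel_le_of_interval_integrals_le)
  define N where "N = (\<integral>x. (g' x)^2 \<partial>lborel)"
  define F where "F = (\<lambda>y s. (g' (y + s))^2)"
  have g_cont: "continuous_on UNIV g"
    using g by (meson DERIV_isCont continuous_at_imp_continuous_on)
  have "continuous_on UNIV (\<lambda>p. F (fst p) (snd p))"
    unfolding F_def by (intro continuous_intros continuous_on_compose2[OF g']) auto
  moreover have "continuous_on UNIV (\<lambda>p. F (snd p) (fst p))"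
    unfolding F_def by (intro continuous_intros continuous_on_compose2[OF g']) auto
  ultimately have F_cont: "continuous_on UNIV (\<lambda>(y, s). F y s)" "continuous_on UNIV (\<lambda>(s, y). F y s)"
    by (simp_all add: case_prod_beta)
  show "integrable lborel (\<lambda>y. (g (y + d) - g y)^2)"
    using L2_diff[OF L2_shift[OF g_L2, of d] g_L2] by (simp add: L2_def)
  have pointwise: "(g (y + d) - g y)^2 \<le> d * integral {0..d} (F y)" for y
  proof -
    have "((\<lambda>s. g' (y + s)) has_integral (g (y + d) - g (y + 0))) {0..d}"
      using \<open>0 \<le> d\<close> DERIV_chain2[OF g DERIV_add[OF DERIV_const[of y] DERIV_ident]]
      by (intro fundamental_theorem_of_calculus)
         (auto simp: has_real_derivative_iff_has_vector_derivative[symmetric] intro: DERIV_subset)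
    then have "integral {0..d} (\<lambda>s. g' (y + s)) = g (y + d) - g y"
      by (simp add: integral_unique)
    moreover have "continuous_on {0..d} (\<lambda>s. g' (y + s))"
      by (intro continuous_intros continuous_on_compose2[OF g']) auto
    ultimately show ?thesis
      using square_integral_le_interval[of d "\<lambda>s. g' (y + s)"] \<open>0 \<le> d\<close> by (simp add: F_def)
  qed
  have slice: "integral {-R..R} (\<lambda>y. F y s) \<le> N" for R s
  proof -
    have "integrable lborel (\<lambda>y. F y s)"
      using L2_shift[OF g'_L2, of s] by (simp add: F_def L2_def)
    moreover have "continuous_on UNIV (\<lambda>y. F y s)"
      unfolding F_def by (intro continuous_intros continuous_on_compose2[OF g']) auto
    ultimately have "integral {-R..R} (\<lambda>y. F y s) \<le> integral UNIV (\<lambda>y. F y s)"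
      by (intro integral_subset_le integrable_on_lborel integrable_continuous_interval)
        (auto simp: F_def intro: continuous_on_subset)
    also have "\<dots> = N"
      using integral_lborel[OF \<open>integrable lborel (\<lambda>y. F y s)\<close>]
        integral_lborel_shift[of "\<lambda>x. (g' x)^2" s] by (simp add: N_def F_def)
    finally show ?thesis .
  qed
  fix R :: real assume "0 \<le> R"
  have G_cont: "continuous_on {-R..R} (\<lambda>y. (g (y + d) - g y)^2)"
    by (intro continuous_intros continuous_on_compose2[OF g_cont]) auto
  have inner_cont: "continuous_on {-R..R} (\<lambda>y. integral (cbox 0 d) (F y))"
    by (rule integral_continuous_on_param) (auto intro: continuous_on_subset[OF F_cont(1)])
  have outer_cont: "continuous_on {0..d} (\<lambda>s. integral (cbox (-R) R) (\<lambda>y. F y s))"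
    by (rule integral_continuous_on_param) (auto intro: continuous_on_subset[OF F_cont(2)])
  have "integral {-R..R} (\<lambda>y. (g (y + d) - g y)^2) \<le> integral {-R..R} (\<lambda>y. d * integral {0..d} (F y))"
    using pointwise G_cont inner_cont
    by (intro integral_le integrable_continuous_interval continuous_on_mult) (auto simp: box_real)
  also have "\<dots> = d * integral {0..d} (\<lambda>s. integral {-R..R} (\<lambda>y. F y s))"
    using integral_swap_continuous[of "-R" 0 R d "\<lambda>y s. F y s"] continuous_on_subset[OF F_cont(1)]
    by (simp add: box_real case_prod_beta)
  also have "\<dots> \<le> d * integral {0..d} (\<lambda>s. N)"
    using slice outer_cont \<open>0 \<le> d\<close>
    by (intro mult_left_mono integral_le integrable_continuous_interval) (auto simp: box_real)
  finally show "integral {-R..R} (\<lambda>y. (g (y + d) - g y)^2) \<le> d^2 * N"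
    using \<open>0 \<le> d\<close> by (simp add: power2_eq_square mult.assoc)
qed

context
  fixes g g' g'' :: "real \<Rightarrow> real" and R :: real
  assumes g: "\<And>x. (g has_real_derivative g' x) (at x)"
    and g': "\<And>x. (g' has_real_derivative g'' x) (at x)"
    and g''_ge: "\<And>x. -R \<le> g'' x"
begin

lemma second_deriv_ge_imp_deriv_ge:
  assumes "x \<le> y"
  shows "g' x - R * (y - x) \<le> g' y"
proof -
  have "g' x + R * x \<le> g' y + R * y"
  proof (rule deriv_nonneg_imp_mono[of x y "\<lambda>z. g' z + R * z" "\<lambda>z. g'' z + R"])
    show "((\<lambda>z. g' z + R * z) has_real_derivative g'' z + R) (at z)" for z
      by (auto intro!: derivative_eq_intros g')
    show "0 \<le> g'' z + R" for z
      using g''_ge[of z] by simp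
  qed (use assms in auto)
  then show ?thesis by (simp add: algebra_simps)
qed

lemma second_deriv_ge_imp_increment_ge:
  assumes "0 \<le> \<delta>"
  shows "\<delta> * g' x - R * \<delta>^2 / 2 \<le> g (x + \<delta>) - g x"
proof -
  let ?h = "\<lambda>z. g z - g' x * z + R * (z - x)^2 / 2"
  have "?h x \<le> ?h (x + \<delta>)"
  proof (rule deriv_nonneg_imp_mono[of x "x + \<delta>" ?h "\<lambda>z. g' z - g' x + R * (z - x)"])
    fix z
    show "(?h has_real_derivative g' z - g' x + R * (z - x)) (at z)"
      by (auto intro!: derivative_eq_intros g simp: power2_eq_square field_simps)
    assume "z \<in> {x..x + \<delta>}"
    then show "0 \<le> g' z - g' x + R * (z - x)"
      using second_deriv_ge_imp_deriv_ge[of x z] by auto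
  qed (use assms in auto)
  then show ?thesis by (simp add: algebra_simps power2_eq_square)
qed

lemma second_deriv_ge_imp_deriv_tendsto_0:
  assumes "0 < R" and g'_nonneg: "\<And>x. 0 \<le> g' x"
    and increments: "\<And>\<delta>. 0 < \<delta> \<Longrightarrow> ((\<lambda>x. g (x + \<delta>) - g x) \<longlongrightarrow> 0) F"
  shows "(g' \<longlongrightarrow> 0) F"
proof (rule tendstoI)
  fix e :: real assume "0 < e"
  define \<delta> where "\<delta> = e / (2 * R)"
  have "0 < \<delta>" using \<open>0 < e\<close> \<open>0 < R\<close> by (simp add: \<delta>_def)
  have "\<forall>\<^sub>F x in F. dist (g (x + \<delta>) - g x) 0 < e * \<delta> / 2"
    using tendstoD[OF increments[OF \<open>0 < \<delta>\<close>], of "e * \<delta> / 2"] \<open>0 < e\<close> \<open>0 < \<delta>\<close> by simp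
  then show "\<forall>\<^sub>F x in F. dist (g' x) 0 < e"
  proof (rule eventually_mono)
    fix x assume "dist (g (x + \<delta>) - g x) 0 < e * \<delta> / 2"
    then have "g (x + \<delta>) - g x < e * \<delta> / 2"
      unfolding dist_real_def by linarith
    then have "\<delta> * g' x - R * \<delta>^2 / 2 < e * \<delta> / 2"
      using second_deriv_ge_imp_increment_ge[of \<delta> x] \<open>0 < \<delta>\<close> by simp
    moreover have "R * \<delta>^2 / 2 = e * \<delta> / 4"
      using \<open>0 < R\<close> by (simp add: \<delta>_def power2_eq_square field_simps)
    ultimately have "\<delta> * g' x < \<delta> * e"
      using mult_pos_pos[OF \<open>0 < e\<close> \<open>0 < \<delta>\<close>] by (simp add: mult.commute)
    then show "dist (g' x) 0 < e"
      using g'_nonneg[of x] \<open>0 < \<delta>\<close> by simp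
  qed
qed

end

lemma integrable_of_antiderivative_eventually_signed:
  fixes g G :: "real \<Rightarrow> real"
  assumes G: "\<And>x. (G has_real_derivative g x) (at x)" and g: "continuous_on UNIV g"
    and G_bot: "(G \<longlongrightarrow> A) at_bot" and G_top: "(G \<longlongrightarrow> B) at_top"
    and g_nonpos: "\<And>x. x < x0 \<Longrightarrow> g x \<le> 0" and g_nonneg: "\<And>x. x1 < x \<Longrightarrow> 0 \<le> g x"
  shows "integrable lborel g"
proof -
  have G_cont: "isCont G x" for x
    using G by (rule DERIV_isCont)
  have g_cont: "isCont g x" for x
    using g by (simp add: continuous_on_eq_continuous_at)
  have "set_integrable lborel (einterval (-\<infinity>) (ereal x0)) (\<lambda>x. - g x)"
  proof (rule interval_integral_FTC_nonneg(1)[where F="\<lambda>x. - G x" and A="-A" and B="- G x0"])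
    show "((\<lambda>x. - G x) has_real_derivative - g x) (at x)" for x
      using G[of x] by (rule DERIV_minus)
    show "(((\<lambda>x. - G x) \<circ> real_of_ereal) \<longlongrightarrow> - A) (at_right (-\<infinity>))"
      unfolding ereal_tendsto_simps1 using G_bot by (rule tendsto_minus)
    show "(((\<lambda>x. - G x) \<circ> real_of_ereal) \<longlongrightarrow> - G x0) (at_left (ereal x0))"
      unfolding ereal_tendsto_simps1 using G_cont[of x0]
      by (intro tendsto_minus) (simp add: isCont_def filterlim_at_split)
  qed (use g_nonpos g_cont in auto)
  then have left: "set_integrable lborel {..<x0} g"
    by (simp add: set_integrable_def)
  have "set_integrable lborel (einterval (ereal x1) \<infinity>) g"
  proof (rule interval_integral_FTC_nonneg(1)[where F=G and A="G x1" and B=B])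
    show "((G \<circ> real_of_ereal) \<longlongrightarrow> B) (at_left \<infinity>)"
      unfolding ereal_tendsto_simps1 by (rule G_top)
    show "((G \<circ> real_of_ereal) \<longlongrightarrow> G x1) (at_right (ereal x1))"
      unfolding ereal_tendsto_simps1 using G_cont[of x1] by (simp add: isCont_def filterlim_at_split)
  qed (use G g_nonneg g_cont in auto)
  then have right: "set_integrable lborel {x1<..} g"
    by simp
  have middle: "set_integrable lborel {x0..x1} g"
    using g by (intro borel_integrable_atLeastAtMost') (auto intro: continuous_on_subset)
  have "set_integrable lborel ({..<x0} \<union> {x0..x1} \<union> {x1<..}) g"
    by (intro set_integrable_Un left middle right) auto
  moreover have "{..<x0} \<union> {x0..x1} \<union> {x1<..} = UNIV" by auto
  ultimately show ?thesis by (simp add: set_integrable_def)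
qed

lemma has_real_derivative_imp_weak_deriv:
  fixes g g' :: "real \<Rightarrow> real"
  assumes g: "\<And>x. (g has_real_derivative g' x) (at x)" and g': "continuous_on UNIV g'"
  shows "weak_deriv g g'"
  unfolding weak_deriv_def
proof (intro allI impI, elim conjE)
  fix \<phi> \<phi>' :: "real \<Rightarrow> real"
  assume \<phi>: "\<forall>x. (\<phi> has_real_derivative \<phi>' x) (at x)" and \<phi>': "continuous_on UNIV \<phi>'"
    and "bounded {x. \<phi> x \<noteq> 0}"
  then obtain R0 where R0: "\<And>x. \<phi> x \<noteq> 0 \<Longrightarrow> \<bar>x\<bar> \<le> R0"
    unfolding bounded_real by auto
  define R where "R = \<bar>R0\<bar> + 1"
  have "0 < R" by (simp add: R_def)
  have \<phi>_zero: "\<phi> x = 0" if "R - 1 < \<bar>x\<bar>" for x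
    using R0[of x] that by (force simp: R_def)
  have \<phi>'_zero: "\<phi>' x = 0" if "R - 1 < \<bar>x\<bar>" for x
  proof -
    have "((\<lambda>_. 0) has_real_derivative \<phi>' x) (at x)"
      by (rule has_field_derivative_transform_within_open[OF \<phi>[rule_format, of x],
            where S="{y. R - 1 < \<bar>y\<bar>}"])
         (use that \<phi>_zero in \<open>auto intro!: open_Collect_less continuous_intros\<close>)
    then show ?thesis using DERIV_const DERIV_unique by blast
  qed
  have g_cont: "continuous_on UNIV g" and \<phi>_cont: "continuous_on UNIV \<phi>"
    using g \<phi> by (meson DERIV_isCont continuous_at_imp_continuous_on)+
  have on_interval: "(\<integral>x. h x \<partial>lborel) = (\<integral>x. indicator {-R..R} x *\<^sub>R h x \<partial>lborel)"
    if "\<And>x. R - 1 < \<bar>x\<bar> \<Longrightarrow> h x = 0" for h :: "real \<Rightarrow> real"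
  proof (rule Bochner_Integration.integral_cong)
    fix x show "h x = indicator {-R..R} x *\<^sub>R h x"
      using that[of x] by (cases "x \<in> {-R..R}") auto
  qed simp
  have integrable: "integrable lborel (\<lambda>x. indicator {-R..R} x *\<^sub>R h x)"
    if "continuous_on UNIV h" for h :: "real \<Rightarrow> real"
    using borel_integrable_atLeastAtMost'[of "-R" R h] that
    unfolding set_integrable_def by (auto intro: continuous_on_subset)
  have "(\<integral>x. indicator {-R..R} x *\<^sub>R (g' x * \<phi> x) \<partial>lborel)
      + (\<integral>x. indicator {-R..R} x *\<^sub>R (g x * \<phi>' x) \<partial>lborel)
      = (\<integral>x. indicator {-R..R} x *\<^sub>R (g' x * \<phi> x + g x * \<phi>' x) \<partial>lborel)"
    unfolding scaleR_add_right using g_cont \<phi>_cont g' \<phi>'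
    by (intro Bochner_Integration.integral_add[symmetric] integrable continuous_on_mult)
  also have "\<dots> = g R * \<phi> R - g (-R) * \<phi> (-R)"
  proof (rule integral_FTC_atLeastAtMost)
    fix x
    have "((\<lambda>x. g x * \<phi> x) has_real_derivative g' x * \<phi> x + g x * \<phi>' x) (at x)"
      using g[of x] \<phi> by (auto intro!: derivative_eq_intros)
    then show "((\<lambda>x. g x * \<phi> x) has_vector_derivative g' x * \<phi> x + g x * \<phi>' x) (at x within {-R..R})"
      by (simp add: has_real_derivative_iff_has_vector_derivative has_vector_derivative_at_within)
  next
    show "continuous_on {-R..R} (\<lambda>x. g' x * \<phi> x + g x * \<phi>' x)"
      using g_cont \<phi>_cont g' \<phi>' by (auto intro!: continuous_intros intro: continuous_on_subset)
  qed (use \<open>0 < R\<close> in simp)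
  also have "\<dots> = 0" using \<phi>_zero[of R] \<phi>_zero[of "-R"] by simp
  finally show "(\<integral>x. g x * \<phi>' x \<partial>lborel) = - (\<integral>x. g' x * \<phi> x \<partial>lborel)"
    using on_interval[of "\<lambda>x. g x * \<phi>' x"] on_interval[of "\<lambda>x. g' x * \<phi> x"] \<phi>_zero \<phi>'_zero
    by simp
qed

lemma continuous_on_LINT_atLeastAtMost:
  fixes \<phi> :: "real \<Rightarrow> real"
  assumes "set_integrable lborel {a..b} \<phi>"
  shows "continuous_on {a..b} (\<lambda>t. LINT s:{a..t}|lborel. \<phi> s)"
proof -
  have "continuous_on {a..b} (\<lambda>t. integral {a..t} \<phi>)"
    by (intro indefinite_integral_continuous_1 set_borel_integral_eq_integral(1) assms)
  moreover have "integral {a..t} \<phi> = (LINT s:{a..t}|lborel. \<phi> s)" if "t \<in> {a..b}" for t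
    using that by (intro set_borel_integral_eq_integral(2)[symmetric] set_integrable_subset[OF assms]) auto
  ultimately show ?thesis by (metis (no_types, lifting) continuous_on_cong)
qed

lemma variational_solution_pairing_continuous:
  assumes sol: "variational_solution \<nu> b f c vhat T u0 u" and w: "L2 w" "L2 w'" "weak_deriv w w'"
  shows "continuous_on {0..T} (\<lambda>t. \<integral>x. u t x * w x \<partial>lborel)"
proof -
  have "\<exists>\<phi>. set_integrable lborel {0..T} \<phi> \<and> (\<forall>t\<in>{0..T}.
      (\<integral>x. u t x * w x \<partial>lborel) = (\<integral>x. u0 x * w x \<partial>lborel) + (LINT s:{0..t}|lborel. \<phi> s))"
    using sol w unfolding variational_solution_def
    by (elim conjE exE) (drule spec[of _ w], drule spec[of _ w'], blast)
  then obtain \<phi> where "set_integrable lborel {0..T} \<phi>"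
    and eq: "\<And>t. t \<in> {0..T} \<Longrightarrow>
      (\<integral>x. u t x * w x \<partial>lborel) = (\<integral>x. u0 x * w x \<partial>lborel) + (LINT s:{0..t}|lborel. \<phi> s)"
    by blast
  then have "continuous_on {0..T} (\<lambda>t. (\<integral>x. u0 x * w x \<partial>lborel) + (LINT s:{0..t}|lborel. \<phi> s))"
    by (intro continuous_intros continuous_on_LINT_atLeastAtMost)
  then show ?thesis
    by (rule continuous_on_cong[THEN iffD1, OF refl, rotated]) (simp add: eq)
qed

lemma AE_le_imp_le_continuous_on:
  fixes h :: "real \<Rightarrow> real"
  assumes h: "continuous_on {a..b} h" and "a < b"
    and ae: "AE t in lborel. t \<in> {a..b} \<longrightarrow> h t \<le> B" and t0: "t0 \<in> {a..b}"
  shows "h t0 \<le> B"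
proof (rule ccontr)
  assume "\<not> h t0 \<le> B"
  then obtain d where "0 < d"
    and d: "\<And>t. t \<in> {a..b} \<Longrightarrow> dist t t0 < d \<Longrightarrow> dist (h t) (h t0) < h t0 - B"
    using h t0 unfolding continuous_on_iff by (metis diff_gt_0_iff_gt not_le)
  then have d: "B < h t" if "t \<in> {a..b}" "dist t t0 < d" for t
    using d[OF that] by (auto simp: dist_real_def)
  define p where "p = max a (t0 - d/2)"
  define q where "q = min b (t0 + d/2)"
  have "p < q" using t0 \<open>0 < d\<close> \<open>a < b\<close> by (auto simp: p_def q_def)
  have sub: "{p..q} \<subseteq> {a..b}" using t0 by (auto simp: p_def q_def)
  have gt: "B < h t" if "t \<in> {p..q}" for t
    using that t0 \<open>0 < d\<close> sub by (intro d) (auto simp: p_def q_def dist_real_def)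
  have "AE t in lborel. t \<notin> {p..q}"
    using ae by eventually_elim (use sub gt in force)
  then have "emeasure lborel {p..q} = 0"
    by (subst AE_iff_measurable[symmetric]) auto
  with \<open>p < q\<close> show False by simp
qed

lemma continuous_on_Times_if_uniformly_lipschitz:
  fixes f :: "'a::metric_space \<Rightarrow> 'b::metric_space \<Rightarrow> 'c::metric_space"
  assumes lip: "\<And>t. t \<in> T \<Longrightarrow> K-lipschitz_on X (f t)"
    and cont: "\<And>x. x \<in> X \<Longrightarrow> continuous_on T (\<lambda>t. f t x)"
  shows "continuous_on (T \<times> X) (\<lambda>(t, x). f t x)"
proof -
  have "local_lipschitz T X f"
    using lip by (intro local_lipschitzI exI[of _ 1] exI[of _ K]) (auto intro: lipschitz_on_subset)
  then show ?thesis using cont by (rule continuous_on_TimesI)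
qed

locale travelling_wave =
  fixes \<nu> b c a :: real and f vhat vhat' vhat'' :: "real \<Rightarrow> real"
  assumes nu_pos: "0 < \<nu>" and b_pos: "0 < b" and c_nonneg: "0 \<le> c"
    and f_cont: "continuous_on UNIV f"
    and a_range: "0 < a" "a < 1"
    and f_zeros: "f 0 = 0" "f 1 = 0"
    and f_neg: "\<And>x. 0 < x \<Longrightarrow> x < a \<Longrightarrow> f x < 0"
    and f_pos: "\<And>x. a < x \<Longrightarrow> x < 1 \<Longrightarrow> 0 < f x"
    and vhat_mono: "mono vhat"
    and vhat_deriv: "\<And>x. (vhat has_real_derivative vhat' x) (at x)"
    and vhat'_deriv: "\<And>x. (vhat' has_real_derivative vhat'' x) (at x)"
    and vhat''_cont: "continuous_on UNIV vhat''"
    and vhat_bot: "(vhat \<longlongrightarrow> 0) at_bot"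
    and vhat_top: "(vhat \<longlongrightarrow> 1) at_top"
    and wave_eq: "\<And>x. c * vhat' x = \<nu> * vhat'' x + b * f (vhat x)"
begin

lemma vhat_cont: "continuous_on UNIV vhat" and vhat'_cont: "continuous_on UNIV vhat'"
  using vhat_deriv vhat'_deriv by (meson DERIV_isCont continuous_at_imp_continuous_on)+

lemma vhat_nonneg: "0 \<le> vhat x"
proof (rule tendsto_upperbound[OF vhat_bot])
  show "\<forall>\<^sub>F y in at_bot. vhat y \<le> vhat x"
    unfolding eventually_at_bot_linorder using vhat_mono by (auto simp: mono_def)
qed simp

lemma vhat_le_1: "vhat x \<le> 1"
proof (rule tendsto_lowerbound[OF vhat_top])
  show "\<forall>\<^sub>F y in at_top. vhat x \<le> vhat y"
    unfolding eventually_at_top_linorder using vhat_mono by (auto simp: mono_def)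
qed simp

lemma vhat'_nonneg: "0 \<le> vhat' x"
  using mono_on_imp_deriv_nonneg[of UNIV vhat "vhat' x" x] vhat_mono vhat_deriv by simp

lemma vhat''_eq: "vhat'' x = (c * vhat' x - b * f (vhat x)) / \<nu>"
  using wave_eq[of x] nu_pos by (simp add: field_simps)

lemma f_vhat_bounded:
  obtains M where "0 \<le> M" "\<And>x. \<bar>f (vhat x)\<bar> \<le> M"
proof -
  have "compact (f ` {0..1})"
    by (intro compact_continuous_image continuous_on_subset[OF f_cont]) auto
  then obtain M where M: "\<forall>v\<in>{0..1}. \<bar>f v\<bar> \<le> M"
    using compact_imp_bounded[of "f ` {0..1}"] unfolding bounded_real by auto
  then have "\<bar>f 0\<bar> \<le> M" by simp
  then have "0 \<le> M" using abs_ge_zero[of "f 0"] by linarith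
  with M show ?thesis
    using vhat_nonneg vhat_le_1 by (intro that[of M]) auto
qed

lemma vhat''_bounded_below:
  obtains R where "0 < R" "\<And>x. -R \<le> vhat'' x"
proof -
  obtain M where "0 \<le> M" and M: "\<And>x. \<bar>f (vhat x)\<bar> \<le> M" using f_vhat_bounded by blast
  have lower: "- (b * M) / \<nu> \<le> vhat'' x" for x
  proof -
    have "b * f (vhat x) \<le> b * M" using M[of x] b_pos by (simp add: abs_le_iff)
    moreover have "0 \<le> c * vhat' x" using vhat'_nonneg[of x] c_nonneg by simp
    ultimately have "- (b * M) \<le> c * vhat' x - b * f (vhat x)" by linarith
    then show ?thesis
      unfolding vhat''_eq using nu_pos by (simp add: field_simps)
  qed
  have "0 \<le> b * M / \<nu>"
    using \<open>0 \<le> M\<close> b_pos nu_pos by simp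
  moreover have "- (b * M / \<nu> + 1) \<le> vhat'' x" for x
    using lower[of x] by simp
  ultimately show ?thesis
    by (intro that[of "b * M / \<nu> + 1"]) auto
qed

lemma vhat'_bounded:
  obtains B where "\<And>x. vhat' x \<le> B"
proof -
  obtain R where "0 < R" "\<And>x. -R \<le> vhat'' x" using vhat''_bounded_below by blast
  then have "vhat' x \<le> 1 + R / 2" for x
    using second_deriv_ge_imp_increment_ge[OF vhat_deriv vhat'_deriv, of R 1 x]
      vhat_le_1[of "x + 1"] vhat_nonneg[of x]
    by simp
  then show ?thesis by (rule that)
qed

lemma vhat''_bounded:
  obtains B where "\<And>x. \<bar>vhat'' x\<bar> \<le> B"
proof -
  obtain M where M: "\<And>x. \<bar>f (vhat x)\<bar> \<le> M" using f_vhat_bounded by blast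
  obtain B where B: "\<And>x. vhat' x \<le> B" using vhat'_bounded by blast
  have "\<bar>c * vhat' x - b * f (vhat x)\<bar> \<le> c * B + b * M" for x
  proof -
    have "0 \<le> c * vhat' x" "c * vhat' x \<le> c * B"
      using vhat'_nonneg[of x] B[of x] c_nonneg by (auto intro: mult_left_mono)
    moreover have "\<bar>b * f (vhat x)\<bar> \<le> b * M"
      using M[of x] b_pos by (simp add: abs_mult)
    ultimately show ?thesis by (simp add: abs_le_iff)
  qed
  then have "\<bar>vhat'' x\<bar> \<le> (c * B + b * M) / \<nu>" for x
    using nu_pos by (simp add: vhat''_eq divide_right_mono)
  then show ?thesis by (rule that)
qed

lemma vhat'_tendsto_0:
  assumes shift: "\<And>\<delta>. filterlim (\<lambda>x. x + \<delta>) F F" and lim: "(vhat \<longlongrightarrow> l) F"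
  shows "(vhat' \<longlongrightarrow> 0) F"
proof -
  obtain R where R: "0 < R" "\<And>x. -R \<le> vhat'' x" using vhat''_bounded_below by blast
  show ?thesis
  proof (rule second_deriv_ge_imp_deriv_tendsto_0[OF vhat_deriv vhat'_deriv R(2) R(1) vhat'_nonneg])
    fix \<delta> :: real
    show "((\<lambda>x. vhat (x + \<delta>) - vhat x) \<longlongrightarrow> 0) F"
      using tendsto_diff[OF filterlim_compose[OF lim shift] lim] by simp
  qed
qed

lemma vhat'_at_top: "(vhat' \<longlongrightarrow> 0) at_top"
proof (rule vhat'_tendsto_0[OF _ vhat_top])
  show "filterlim (\<lambda>x. x + \<delta>) at_top at_top" for \<delta> :: real
    using filterlim_tendsto_add_at_top[OF tendsto_const[of \<delta>] filterlim_ident] by (simp add: add.commute)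
qed

lemma vhat'_at_bot: "(vhat' \<longlongrightarrow> 0) at_bot"
proof (rule vhat'_tendsto_0[OF _ vhat_bot])
  show "filterlim (\<lambda>x. x + \<delta>) at_bot at_bot" for \<delta> :: real
    unfolding filterlim_at_bot eventually_at_bot_linorder by (metis add.commute le_diff_eq)
qed

lemma vhat'_integrable: "integrable lborel vhat'"
  and integral_vhat': "(\<integral>x. vhat' x \<partial>lborel) = 1"
proof -
  have "set_integrable lborel (einterval (-\<infinity>) \<infinity>) vhat'"
    and "(LBINT x=-\<infinity>..\<infinity>. vhat' x) = 1 - 0"
    by (rule interval_integral_FTC_nonneg[where F=vhat and A=0 and B=1];
        auto simp: ereal_tendsto_simps1 vhat_deriv vhat'_nonneg vhat_top vhat_bot
             intro!: DERIV_isCont vhat'_deriv)+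
  then show "integrable lborel vhat'" "(\<integral>x. vhat' x \<partial>lborel) = 1"
    by (simp_all add: set_integrable_def interval_lebesgue_integral_def set_lebesgue_integral_def)
qed

lemma f_vhat_integrable: "integrable lborel (\<lambda>x. f (vhat x))"
proof -
  obtain x0 where x0: "vhat x0 < a"
    using order_tendstoD(2)[OF vhat_bot a_range(1)] by (auto simp: eventually_at_bot_linorder)
  obtain x1 where x1: "a < vhat x1"
    using order_tendstoD(1)[OF vhat_top a_range(2)] by (auto simp: eventually_at_top_linorder)
  show ?thesis
  proof (rule integrable_of_antiderivative_eventually_signed)
    show "((\<lambda>x. (c * vhat x - \<nu> * vhat' x) / b) has_real_derivative f (vhat x)) (at x)" for x
    proof -
      have "((\<lambda>x. (c * vhat x - \<nu> * vhat' x) / b) has_real_derivative (c * vhat' x - \<nu> * vhat'' x) / b) (at x)"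
        using b_pos by (auto intro!: derivative_eq_intros vhat_deriv vhat'_deriv)
      moreover have "(c * vhat' x - \<nu> * vhat'' x) / b = f (vhat x)"
        using wave_eq[of x] b_pos by (simp add: field_simps)
      ultimately show ?thesis by simp
    qed
    show "continuous_on UNIV (\<lambda>x. f (vhat x))"
      by (rule continuous_on_compose2[OF f_cont vhat_cont]) auto
    show "((\<lambda>x. (c * vhat x - \<nu> * vhat' x) / b) \<longlongrightarrow> (c * 0 - \<nu> * 0) / b) at_bot"
      using b_pos by (intro tendsto_intros vhat_bot vhat'_at_bot) simp
    show "((\<lambda>x. (c * vhat x - \<nu> * vhat' x) / b) \<longlongrightarrow> (c * 1 - \<nu> * 0) / b) at_top"
      using b_pos by (intro tendsto_intros vhat_top vhat'_at_top) simp
  next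
    fix x assume "x < x0"
    then have "vhat x < a" using x0 monoD[OF vhat_mono, of x x0] by simp
    then show "f (vhat x) \<le> 0"
      using f_neg[of "vhat x"] f_zeros vhat_nonneg[of x] by (cases "vhat x = 0") auto
  next
    fix x assume "x1 < x"
    then have "a < vhat x" using x1 monoD[OF vhat_mono, of x1 x] by simp
    then show "0 \<le> f (vhat x)"
      using f_pos[of "vhat x"] f_zeros vhat_le_1[of x] by (cases "vhat x = 1") auto
  qed
qed

lemma vhat''_integrable: "integrable lborel vhat''"
  using vhat'_integrable f_vhat_integrable by (simp add: vhat''_eq[abs_def])

lemma L2_vhat'_shift: "L2 (\<lambda>x. vhat' (x + C))"
proof -
  obtain B where "\<And>x. vhat' x \<le> B" using vhat'_bounded by blast
  then have "\<bar>vhat' x\<bar> \<le> B" for x using vhat'_nonneg[of x] by simp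
  then show ?thesis by (intro L2_shift L2_if_integrable_bounded[OF vhat'_integrable])
qed

lemma L2_vhat''_shift: "L2 (\<lambda>x. vhat'' (x + C))"
proof -
  obtain B where "\<And>x. \<bar>vhat'' x\<bar> \<le> B" using vhat''_bounded by blast
  then show ?thesis by (intro L2_shift L2_if_integrable_bounded[OF vhat''_integrable])
qed

lemma weak_deriv_vhat'_shift: "weak_deriv (\<lambda>x. vhat' (x + C)) (\<lambda>x. vhat'' (x + C))"
proof (rule has_real_derivative_imp_weak_deriv)
  show "((\<lambda>x. vhat' (x + C)) has_real_derivative vhat'' (x + C)) (at x)" for x
    using DERIV_chain2[OF vhat'_deriv DERIV_add[OF DERIV_ident DERIV_const[of C]]] by simp
  show "continuous_on UNIV (\<lambda>x. vhat'' (x + C))"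
    by (intro continuous_on_compose2[OF vhat''_cont] continuous_intros) auto
qed

lemma vhat'_shift_difference_square_le:
  "(\<integral>x. (vhat' (x + C1) - vhat' (x + C2))^2 \<partial>lborel) \<le> (C1 - C2)^2 * (\<integral>x. (vhat'' x)^2 \<partial>lborel)"
proof -
  have ordered: "(\<integral>x. (vhat' (x + C1) - vhat' (x + C2))^2 \<partial>lborel) \<le> (C1 - C2)^2 * (\<integral>x. (vhat'' x)^2 \<partial>lborel)"
    if "C2 \<le> C1" for C1 C2
  proof -
    have "(\<integral>x. (vhat' (x + C1) - vhat' (x + C2))^2 \<partial>lborel)
        = (\<integral>y. (vhat' (y + (C1 - C2)) - vhat' y)^2 \<partial>lborel)"
      using integral_lborel_shift[of "\<lambda>y. (vhat' (y + (C1 - C2)) - vhat' y)^2" C2]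
      by (simp add: algebra_simps)
    also have "\<dots> \<le> (C1 - C2)^2 * (\<integral>x. (vhat'' x)^2 \<partial>lborel)"
      using that L2_vhat'_shift[of 0] L2_vhat''_shift[of 0]
      by (intro integral_shift_difference_square_le[OF vhat'_deriv vhat''_cont]) simp_all
    finally show ?thesis .
  qed
  show ?thesis
    using ordered[of C1 C2] ordered[of C2 C1] by (cases "C2 \<le> C1") (simp_all add: power2_commute)
qed

lemma vhat_lipschitz:
  obtains B where "B-lipschitz_on UNIV vhat"
proof -
  obtain B where B: "\<And>x. vhat' x \<le> B" using vhat'_bounded by blast
  have "B-lipschitz_on UNIV vhat"
  proof (rule bounded_derivative_imp_lipschitz)
    show "(vhat has_derivative (\<lambda>h. vhat' x * h)) (at x within UNIV)" for x
      using vhat_deriv[of x] by (simp add: has_field_derivative_def)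
    show "onorm (\<lambda>h. vhat' x * h) \<le> B" for x
      using B[of x] vhat'_nonneg[of x] by (intro onorm_le) (simp add: abs_mult mult_right_mono)
    show "0 \<le> B" using B[of 0] vhat'_nonneg[of 0] by simp
  qed simp
  then show ?thesis by (rule that)
qed

definition shift_pairing :: "real \<Rightarrow> real" where
  "shift_pairing z = (\<integral>y. (vhat (y + z) - vhat y) * vhat' y \<partial>lborel)"

lemma shift_difference_pairing_integrable:
  "integrable lborel (\<lambda>y. (vhat (y + z) - vhat (y + z')) * vhat' y)"
proof (rule Bochner_Integration.integrable_bound[OF vhat'_integrable])
  have "continuous_on UNIV (\<lambda>y. (vhat (y + z) - vhat (y + z')) * vhat' y)"
    by (intro continuous_intros continuous_on_compose2[OF vhat_cont] vhat'_cont) auto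
  then show "(\<lambda>y. (vhat (y + z) - vhat (y + z')) * vhat' y) \<in> borel_measurable lborel"
    by (simp add: borel_measurable_continuous_onI)
  have "\<bar>vhat (y + z) - vhat (y + z')\<bar> * vhat' y \<le> vhat' y" for y
    using vhat_nonneg[of "y + z"] vhat_le_1[of "y + z"] vhat_nonneg[of "y + z'"] vhat_le_1[of "y + z'"]
      vhat'_nonneg[of y] by (intro mult_left_le_one_le) auto
  then show "AE y in lborel. norm ((vhat (y + z) - vhat (y + z')) * vhat' y) \<le> norm (vhat' y)"
    using vhat'_nonneg by (simp add: abs_mult)
qed

lemma shift_pairing_lipschitz:
  obtains K where "K-lipschitz_on UNIV shift_pairing"
proof -
  obtain B where B: "B-lipschitz_on UNIV vhat" using vhat_lipschitz by blast
  have "\<bar>shift_pairing z - shift_pairing z'\<bar> \<le> B * \<bar>z - z'\<bar>" for z z'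
  proof -
    have "shift_pairing z - shift_pairing z' = (\<integral>y. (vhat (y + z) - vhat (y + z')) * vhat' y \<partial>lborel)"
      unfolding shift_pairing_def
      using shift_difference_pairing_integrable[of z 0] shift_difference_pairing_integrable[of z' 0]
      by (simp flip: Bochner_Integration.integral_diff add: algebra_simps)
    also have "\<bar>\<dots>\<bar> \<le> (\<integral>y. B * \<bar>z - z'\<bar> * vhat' y \<partial>lborel)"
    proof (rule integral_abs_bound_integral)
      show "\<bar>(vhat (y + z) - vhat (y + z')) * vhat' y\<bar> \<le> B * \<bar>z - z'\<bar> * vhat' y" for y
        using lipschitz_onD[OF B, of "y + z" "y + z'"] vhat'_nonneg[of y]
        by (simp add: dist_real_def abs_mult mult_right_mono)
    qed (use shift_difference_pairing_integrable vhat'_integrable in auto)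
    also have "\<dots> = B * \<bar>z - z'\<bar>" using integral_vhat' by simp
    finally show ?thesis .
  qed
  then have "B-lipschitz_on UNIV shift_pairing"
    using lipschitz_on_nonneg[OF B] by (intro lipschitz_onI) (simp_all add: dist_real_def)
  then show ?thesis by (rule that)
qed

lemma pairing_with_shifted_wave:
  assumes "L2 g"
  shows "(\<integral>x. (g x + vhat (x + z) - vhat (x + C)) * vhat' (x + C) \<partial>lborel)
    = (\<integral>x. g x * vhat' (x + C) \<partial>lborel) + shift_pairing (z - C)"
proof -
  have "shift_pairing (z - C) = (\<integral>x. (vhat (x + z) - vhat (x + C)) * vhat' (x + C) \<partial>lborel)"
    unfolding shift_pairing_def
    using integral_lborel_shift[of "\<lambda>y. (vhat (y + (z - C)) - vhat y) * vhat' y" C] by simp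
  moreover have "integrable lborel (\<lambda>x. (vhat (x + z) - vhat (x + C)) * vhat' (x + C))"
    using shift_difference_pairing_integrable[of "z - C" 0]
      integrable_lborel_shift_iff[of "\<lambda>y. (vhat (y + (z - C)) - vhat (y + 0)) * vhat' y" C]
    by simp
  ultimately show ?thesis
    using L2_mult_integrable[OF assms L2_vhat'_shift[of C]]
    by (simp add: distrib_right add_diff_eq[symmetric] flip: Bochner_Integration.integral_add)
qed

lemma pairing_vhat'_shift_lipschitz:
  assumes g: "L2 g" and M: "(\<integral>x. (g x)^2 \<partial>lborel) \<le> M"
  shows "\<bar>(\<integral>x. g x * vhat' (x + C1) \<partial>lborel) - (\<integral>x. g x * vhat' (x + C2) \<partial>lborel)\<bar>
    \<le> (M + (\<integral>x. (vhat'' x)^2 \<partial>lborel)) / 2 * \<bar>C1 - C2\<bar>"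
proof (cases "C1 = C2")
  case False
  (* weighted AM-GM with weight |C1 - C2| instead of Cauchy-Schwarz, to avoid square roots *)
  define l where "l = \<bar>C1 - C2\<bar>"
  have "0 < l" using False by (simp add: l_def)
  have "(\<integral>x. g x * vhat' (x + C1) \<partial>lborel) - (\<integral>x. g x * vhat' (x + C2) \<partial>lborel)
      = (\<integral>x. g x * (vhat' (x + C1) - vhat' (x + C2)) \<partial>lborel)"
    using L2_mult_integrable[OF g L2_vhat'_shift] by (simp add: right_diff_distrib)
  also have "\<bar>\<dots>\<bar> \<le> (l * (\<integral>x. (g x)^2 \<partial>lborel)
      + (\<integral>x. (vhat' (x + C1) - vhat' (x + C2))^2 \<partial>lborel) / l) / 2"
    by (rule L2_abs_integral_mult_le[OF g L2_diff[OF L2_vhat'_shift L2_vhat'_shift] \<open>0 < l\<close>])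
  also have "\<dots> \<le> (l * M + l^2 * (\<integral>x. (vhat'' x)^2 \<partial>lborel) / l) / 2"
    using M vhat'_shift_difference_square_le[of C1 C2] \<open>0 < l\<close>
    by (intro divide_right_mono add_mono mult_left_mono) (auto simp: l_def)
  also have "\<dots> = (M + (\<integral>x. (vhat'' x)^2 \<partial>lborel)) / 2 * \<bar>C1 - C2\<bar>"
    using \<open>0 < l\<close> unfolding l_def[symmetric] by (simp add: power2_eq_square field_simps)
  finally show ?thesis .
qed simp

lemma solution_pairing_lipschitz:
  assumes sol: "variational_solution \<nu> b f c vhat T u0 u" and "0 < T"
  obtains K where "\<And>t. t \<in> {0..T} \<Longrightarrow> K-lipschitz_on UNIV (\<lambda>C. \<integral>x. u t x * vhat' (x + C) \<partial>lborel)"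
proof -
  define U where "U t C = (\<integral>x. u t x * vhat' (x + C) \<partial>lborel)" for t C
  have u: "\<And>t. t \<in> {0..T} \<Longrightarrow> L2 (u t)"
    using sol unfolding variational_solution_def by blast
  obtain M where M: "AE t in lborel. t \<in> {0..T} \<longrightarrow> (\<integral>x. (u t x)^2 \<partial>lborel) \<le> M"
    using sol unfolding variational_solution_def by blast
  define K where "K = (max M 0 + (\<integral>x. (vhat'' x)^2 \<partial>lborel)) / 2"
  (* the energy bound holds only for almost every t; continuity in t covers the rest *)
  have "\<bar>U t C1 - U t C2\<bar> \<le> K * \<bar>C1 - C2\<bar>" if "t \<in> {0..T}" for t C1 C2
  proof (rule AE_le_imp_le_continuous_on[OF _ \<open>0 < T\<close> _ that])
    show "continuous_on {0..T} (\<lambda>t. \<bar>U t C1 - U t C2\<bar>)"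
      unfolding U_def
      using variational_solution_pairing_continuous[OF sol L2_vhat'_shift L2_vhat''_shift weak_deriv_vhat'_shift]
      by (intro continuous_intros)
    show "AE t in lborel. t \<in> {0..T} \<longrightarrow> \<bar>U t C1 - U t C2\<bar> \<le> K * \<bar>C1 - C2\<bar>"
      using M
    proof eventually_elim
      case (elim t)
      show ?case
      proof
        assume t: "t \<in> {0..T}"
        with elim have "(\<integral>x. (u t x)^2 \<partial>lborel) \<le> max M 0" by simp
        from pairing_vhat'_shift_lipschitz[OF u[OF t] this]
        show "\<bar>U t C1 - U t C2\<bar> \<le> K * \<bar>C1 - C2\<bar>" by (simp add: U_def K_def)
      qed
    qed
  qed
  moreover have "0 \<le> K"
    by (simp add: K_def)
  ultimately show ?thesis
    by (intro that[of K] lipschitz_onI) (simp_all add: dist_real_def U_def)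
qed

lemma solution_wave_pairing_regular:
  assumes sol: "variational_solution \<nu> b f c vhat T u0 u" and "0 < T"
  defines "B t C \<equiv> (\<integral>x. u t x * vhat' (x + C) \<partial>lborel) + shift_pairing (c * t - C)"
  obtains K where "continuous_on ({0..T} \<times> UNIV) (\<lambda>(t, C). B t C)"
    and "\<And>t. t \<in> {0..T} \<Longrightarrow> K-lipschitz_on UNIV (B t)"
proof -
  obtain K1 where K1: "\<And>t. t \<in> {0..T} \<Longrightarrow> K1-lipschitz_on UNIV (\<lambda>C. \<integral>x. u t x * vhat' (x + C) \<partial>lborel)"
    using solution_pairing_lipschitz[OF sol \<open>0 < T\<close>] by blast
  obtain K2 where K2: "K2-lipschitz_on UNIV shift_pairing"
    using shift_pairing_lipschitz by blast
  have B_lip: "(K1 + K2)-lipschitz_on UNIV (B t)" if "t \<in> {0..T}" for t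
    unfolding B_def using lipschitz_on_compose2[OF lipschitz_on_diff[OF lipschitz_on_constant lipschitz_on_id]
        lipschitz_on_subset[OF K2]]
    by (intro lipschitz_on_add K1[OF that]) simp_all
  have "continuous_on ({0..T} \<times> UNIV) (\<lambda>(t, C). B t C)"
    using B_lip unfolding B_def
    by (intro continuous_on_Times_if_uniformly_lipschitz continuous_intros
        continuous_on_compose2[OF lipschitz_on_continuous_on[OF K2]]
        variational_solution_pairing_continuous[OF sol L2_vhat'_shift L2_vhat''_shift weak_deriv_vhat'_shift])
       (auto simp: B_def)
  then show ?thesis using B_lip by (rule that)
qed

end

theorem proposition2p2:
  fixes \<nu> b a vs c T :: real
    and f f' f'' vhat vhat' vhat'' u0 :: "real \<Rightarrow> real"
    and u :: "real \<Rightarrow> real \<Rightarrow> real"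
  assumes nu_pos: "\<nu> > 0" and b_pos: "b > 0"
    and f_deriv: "\<And>x. (f has_real_derivative f' x) (at x)"
    and f'_cont: "continuous_on UNIV f'"
    and a_range: "0 < a" "a < 1"
    and f_zeros: "f 0 = 0" "f a = 0" "f 1 = 0"
    and f_neg: "\<And>x. 0 < x \<Longrightarrow> x < a \<Longrightarrow> f x < 0"
    and f_pos: "\<And>x. a < x \<Longrightarrow> x < 1 \<Longrightarrow> f x > 0"
    and f'_signs: "f' 0 < 0" "f' a > 0" "f' 1 < 0"
    and f_int: "integral {0..1} f \<ge> 0"
    and vs_range: "a < vs" "vs < 1"
    and f'_deriv: "\<And>x. x \<in> {0..1} \<Longrightarrow> (f' has_real_derivative f'' x) (at x)"
    and f''_pos: "\<And>x. 0 \<le> x \<Longrightarrow> x < vs \<Longrightarrow> f'' x > 0"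
    and f''_neg: "\<And>x. vs < x \<Longrightarrow> x \<le> 1 \<Longrightarrow> f'' x < 0"
    and eta1: "bdd_above (range f')"
    and f_lip: "\<exists>L. \<forall>x1 x2. \<bar>f x1 - f x2\<bar> \<le> L * \<bar>x1 - x2\<bar> * (1 + x1^2 + x2^2)"
    and eta2: "\<exists>\<eta>2. \<forall>v\<in>{0..1}. \<forall>w. \<bar>f (w + v) - f v - f' v * w\<bar> \<le> \<eta>2 * (1 + \<bar>w\<bar>) * w^2"
    and vhat_mono: "mono vhat"
    and vhat_deriv: "\<And>x. (vhat has_real_derivative vhat' x) (at x)"
    and vhat'_deriv: "\<And>x. (vhat' has_real_derivative vhat'' x) (at x)"
    and vhat''_cont: "continuous_on UNIV vhat''"
    and vhat_bot: "(vhat \<longlongrightarrow> 0) at_bot"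
    and vhat_top: "(vhat \<longlongrightarrow> 1) at_top"
    and c_nonneg: "c \<ge> 0"
    and tw_eq: "\<And>x. c * vhat' x = \<nu> * vhat'' x + b * f (vhat x)"
    and T_pos: "T > 0"
    and u0_H: "L2 u0"
    and sol: "variational_solution \<nu> b f c vhat T u0 u"
  shows "continuous_on ({0..T} \<times> UNIV)
           (\<lambda>(t, C). \<integral>x. (u t x + vhat (x + c * t) - vhat (x + C)) * vhat' (x + C) \<partial>lborel)
       \<and> (\<exists>K. \<forall>t\<in>{0..T}. \<forall>C1 C2.
           \<bar>(\<integral>x. (u t x + vhat (x + c * t) - vhat (x + C1)) * vhat' (x + C1) \<partial>lborel)
            - (\<integral>x. (u t x + vhat (x + c * t) - vhat (x + C2)) * vhat' (x + C2) \<partial>lborel)\<bar>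
           \<le> K * \<bar>C1 - C2\<bar>)"
proof -
  (* of f only continuity and the sign pattern are used *)
  have f_cont: "continuous_on UNIV f"
    using f_deriv by (meson DERIV_isCont continuous_at_imp_continuous_on)
  interpret travelling_wave \<nu> b c a f vhat vhat' vhat''
    by unfold_locales (use nu_pos b_pos c_nonneg f_cont a_range f_zeros f_neg f_pos vhat_mono
        vhat_deriv vhat'_deriv vhat''_cont vhat_bot vhat_top tw_eq in auto)
  define B where "B t C = (\<integral>x. u t x * vhat' (x + C) \<partial>lborel) + shift_pairing (c * t - C)" for t C
  have B_eq: "(\<integral>x. (u t x + vhat (x + c * t) - vhat (x + C)) * vhat' (x + C) \<partial>lborel) = B t C"
    if "t \<in> {0..T}" for t C
    using sol that unfolding B_def variational_solution_def by (blast intro: pairing_with_shifted_wave)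
  obtain K where B_cont: "continuous_on ({0..T} \<times> UNIV) (\<lambda>(t, C). B t C)"
    and B_lip: "\<And>t. t \<in> {0..T} \<Longrightarrow> K-lipschitz_on UNIV (B t)"
    using solution_wave_pairing_regular[OF sol T_pos] unfolding B_def by blast
  have "continuous_on ({0..T} \<times> UNIV)
      (\<lambda>(t, C). \<integral>x. (u t x + vhat (x + c * t) - vhat (x + C)) * vhat' (x + C) \<partial>lborel)"
    using B_cont by (rule continuous_on_cong[THEN iffD2, OF refl, rotated]) (auto simp: B_eq)
  moreover have "\<bar>B t C1 - B t C2\<bar> \<le> K * \<bar>C1 - C2\<bar>" if "t \<in> {0..T}" for t C1 C2
    using lipschitz_onD[OF B_lip[OF that]] by (simp add: dist_real_def)
  ultimately show ?thesis
    by (auto simp: B_eq intro!: exI[of _ K])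
qed

end
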